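(* Let $n\ge2$ and $Q\in SU_n$ with eigenvalues $\mu_1,\dots,\mu_n$ (with multiplicity). Let $s(Q)$ be the multiplicity of $-1$ as an eigenvalue of $Q$ (possibly $0$), $\zeta(Q):=\frac1{2\pi}\sum_{j=1}^n\arg(\mu_j)$, $m(Q):=\min\{\|X\|_\phi^2:X\in\mathfrak{su}_n,\ \exp(X)=Q\}$ and $\Theta(Q):=\{X\in\mathfrak{su}_n:\exp(X)=Q,\ \|X\|_\phi^2=m(Q)\}$. Then the following are equivalent: (i) $\mathfrak{su}_n\text{--}plog(Q)\ne\emptyset$; (ii) $\zeta(Q)\in\{0,1,\dots,s(Q)\}$; (iii) $m(Q)=\sum_{j=1}^n(\arg(\mu_j))^2$. Moreover, if any of these conditions holds, then $\Theta(Q)=\mathfrak{su}_n\text{--}plog(Q)$.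
   Context: $SU_n$ is the special unitary group, $\mathfrak{su}_n$ its Lie algebra of traceless skew-Hermitian matrices, $\|X\|_\phi=\sqrt{\mathrm{tr}(XX^* )}$ the Frobenius norm, $\arg(z)\in(-\pi,\pi]$ the principal argument. A generalized principal $\mathfrak{su}_n$-logarithm of $Q$ is a matrix $X\in\mathfrak{su}_n$ with $\exp(X)=Q$ such that every eigenvalue $\lambda$ of $X$ satisfies $-\pi\le\mathrm{Im}(\lambda)\le\pi$; $\mathfrak{su}_n\text{--}plog(Q)$ is the set of all of them. *)

theory Defs
  imports "HOL-Analysis.Complex_Transcendental" "Jordan_Normal_Form.Char_Poly"
begin

definition cadj :: "complex mat \<Rightarrow> complex mat" where
  "cadj A = mat (dim_col A) (dim_row A) (\<lambda>(i,j). cnj (A $$ (j,i)))"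

definition mtrace :: "complex mat \<Rightarrow> complex" where
  "mtrace A = (\<Sum>i<dim_row A. A $$ (i,i))"

definition mexp :: "complex mat \<Rightarrow> complex mat" where
  "mexp X = mat (dim_row X) (dim_col X)
     (\<lambda>(i,j). \<Sum>k. (X ^\<^sub>m k) $$ (i,j) / of_nat (fact k))"

definition frob2 :: "complex mat \<Rightarrow> real" where
  "frob2 X = (\<Sum>i<dim_row X. \<Sum>j<dim_col X. (cmod (X $$ (i,j)))\<^sup>2)"

definition SU :: "nat \<Rightarrow> complex mat set" where
  "SU n = {Q \<in> carrier_mat n n. Q * cadj Q = 1\<^sub>m n \<and> det Q = 1}"

definition su :: "nat \<Rightarrow> complex mat set" where
  "su n = {X \<in> carrier_mat n n. cadj X = - X \<and> mtrace X = 0}"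

definition eigs :: "complex mat \<Rightarrow> complex multiset" where
  "eigs Q = proots (char_poly Q)"

definition s_mult :: "complex mat \<Rightarrow> nat" where
  "s_mult Q = count (eigs Q) (-1)"

definition zeta :: "complex mat \<Rightarrow> real" where
  "zeta Q = (\<Sum>\<^sub># (image_mset Arg (eigs Q))) / (2 * pi)"

definition m_min :: "nat \<Rightarrow> complex mat \<Rightarrow> real" where
  "m_min n Q = Inf {frob2 X | X. X \<in> su n \<and> mexp X = Q}"

definition Theta :: "nat \<Rightarrow> complex mat \<Rightarrow> complex mat set" where
  "Theta n Q = {X \<in> su n. mexp X = Q \<and> frob2 X = m_min n Q}"

definition su_plog :: "nat \<Rightarrow> complex mat \<Rightarrow> complex mat set" where
  "su_plog n Q = {X \<in> su n. mexp X = Q \<and>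
      (\<forall>l. eigenvalue X l \<longrightarrow> - pi \<le> Im l \<and> Im l \<le> pi)}"

end

theory Submission
  imports Defs "Jordan_Normal_Form.Schur_Decomposition"
    "HOL-Computational_Algebra.Fundamental_Theorem_Algebra"
begin

(* Every X in su_n is unitarily diagonalisable, X = U diag(i t_1, ..., i t_n) U^*, with
   sum t_j = 0, |X|^2 = sum t_j^2 and exp X = U diag(e^(i t_j)) U^*.  So the su_n-logarithms of Q
   correspond to zero-sum lifts t_j of the eigenvalue angles of Q, and the principal ones to lifts
   in [-pi, pi].  A lift in [-pi, pi] differs from arg mu_j only by replacing pi with -pi, which
   lowers sum arg mu_j by 2 pi; hence a principal lift exists iff zeta(Q) is one of 0, ..., s(Q).
   Always t_j^2 >= arg(e^(i t_j))^2, with equality iff |t_j| <= pi, and for |t_j| > pi the excess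
   is bounded below by a constant depending only on the finitely many eigenvalues.  Hence m(Q)
   equals sum arg(mu_j)^2 iff a principal logarithm exists, and the minimisers are then exactly
   the principal logarithms. *)

unbundle no vec_syntax

lemma cadj_dims [simp]: "dim_row (cadj A) = dim_col A" "dim_col (cadj A) = dim_row A"
  by (auto simp: cadj_def)

lemma cadj_carrier [simp]: "A \<in> carrier_mat nr nc \<Longrightarrow> cadj A \<in> carrier_mat nc nr"
  by (auto simp: cadj_def)

lemma cadj_index [simp]:
  "i < dim_col A \<Longrightarrow> j < dim_row A \<Longrightarrow> cadj A $$ (i,j) = cnj (A $$ (j,i))"
  by (auto simp: cadj_def)

lemma cadj_cadj [simp]: "cadj (cadj A) = A"
  by (rule eq_matI) auto

lemma cadj_one [simp]: "cadj (1\<^sub>m n) = 1\<^sub>m n"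
  by (rule eq_matI) auto

lemma cadj_mult:
  assumes "A \<in> carrier_mat n m" "B \<in> carrier_mat m k"
  shows "cadj (A * B) = cadj B * cadj A"
  by (rule eq_matI) (use assms in \<open>auto simp: scalar_prod_def mult.commute intro!: sum.cong\<close>)

lemma cadj_mult_index:
  assumes "A \<in> carrier_mat n m" "B \<in> carrier_mat n k" "i < m" "j < k"
  shows "(cadj A * B) $$ (i,j) = col B j \<bullet>c col A i"
  using assms by (auto simp: scalar_prod_def mult.commute intro!: sum.cong)

lemma cscalar_prod_self: "w \<bullet>c w = of_real (\<Sum>i<dim_vec w. (cmod (w $ i))\<^sup>2)"
proof -
  have "w \<bullet>c w = (\<Sum>i<dim_vec w. w $ i * cnj (w $ i))"
    by (simp add: scalar_prod_def atLeast0LessThan)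
  also have "\<dots> = (\<Sum>i<dim_vec w. of_real ((cmod (w $ i))\<^sup>2))"
    by (simp only: complex_norm_square)
  finally show ?thesis by simp
qed

abbreviation normal_mat :: "complex mat \<Rightarrow> bool" where
  "normal_mat A \<equiv> A * cadj A = cadj A * A"

lemma mat_diag_dims [simp]: "dim_row (mat_diag n f) = n" "dim_col (mat_diag n f) = n"
  by (auto simp: mat_diag_def)

lemma mat_diag_index [simp]:
  "i < n \<Longrightarrow> j < n \<Longrightarrow> mat_diag n f $$ (i,j) = (if i = j then f i else 0)"
  by (simp add: mat_diag_def)

lemma cadj_mat_diag: "cadj (mat_diag n f) = mat_diag n (\<lambda>i. cnj (f i))"
  by (rule eq_matI) auto

lemma uminus_mat_diag: "- mat_diag n f = mat_diag n (\<lambda>i. - f i :: complex)"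
  by (rule eq_matI) auto

lemma upper_triangular_mat_diag: "upper_triangular (mat_diag n f)"
  by (auto simp: upper_triangular_def)

lemma diag_mat_mat_diag: "diag_mat (mat_diag n f) = map f [0..<n]"
  by (auto simp: diag_mat_def)

lemma mat_diag_cong: "(\<And>i. i < n \<Longrightarrow> f i = g i) \<Longrightarrow> mat_diag n f = mat_diag n g"
  by (rule eq_matI) auto

lemma mat_diag_eqD: "mat_diag n f = mat_diag n g \<Longrightarrow> i < n \<Longrightarrow> f i = g i"
  by (metis mat_diag_index)

definition unitary_mat :: "nat \<Rightarrow> complex mat \<Rightarrow> bool" where
  "unitary_mat n U \<longleftrightarrow> U \<in> carrier_mat n n \<and> cadj U * U = 1\<^sub>m n"

lemma unitary_matD:
  assumes "unitary_mat n U"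
  shows "U \<in> carrier_mat n n" "cadj U \<in> carrier_mat n n"
    "cadj U * U = 1\<^sub>m n" "U * cadj U = 1\<^sub>m n"
  using assms mat_mult_left_right_inverse[of "cadj U" n U] by (auto simp: unitary_mat_def)

lemma unitary_mat_mult:
  assumes U: "unitary_mat n U" and V: "unitary_mat n V"
  shows "unitary_mat n (U * V)"
proof -
  note UV = unitary_matD[OF U] unitary_matD[OF V]
  have "cadj (U * V) * (U * V) = cadj V * ((cadj U * U) * V)"
    using UV(1,2,5,6) by (simp add: cadj_mult[of U n n V n] assoc_mult_mat[of _ n n _ n _ n])
  also have "\<dots> = 1\<^sub>m n"
    using UV by simp
  finally show ?thesis
    using UV unfolding unitary_mat_def by auto
qed

lemma unitary_conj_cancel:
  assumes U: "unitary_mat n U" and D: "D \<in> carrier_mat n n"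
  shows "cadj U * (U * D * cadj U) * U = D"
proof -
  note UU = unitary_matD[OF U]
  have "cadj U * (U * D * cadj U) * U = (cadj U * U) * (D * (cadj U * U))"
    using UU(1,2) D by (simp add: assoc_mult_mat[of _ n n _ n _ n] mult_carrier_mat[of _ n n])
  also have "\<dots> = D"
    using UU D by simp
  finally show ?thesis .
qed

section \<open>Spectral theorem for normal matrices\<close>

definition cnormalize :: "complex vec \<Rightarrow> complex vec" where
  "cnormalize w = complex_of_real (1 / sqrt (\<Sum>i<dim_vec w. (cmod (w $ i))\<^sup>2)) \<cdot>\<^sub>v w"

lemma cnormalize_carrier [simp]: "w \<in> carrier_vec n \<Longrightarrow> cnormalize w \<in> carrier_vec n"
  by (simp add: cnormalize_def)

lemma unitary_mat_of_corthogonal_cols: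
  assumes ws: "set ws \<subseteq> carrier_vec n" "corthogonal ws" "length ws = n"
  shows "unitary_mat n (mat_of_cols n (map cnormalize ws))"
proof -
  define W where "W = mat_of_cols n (map cnormalize ws)"
  define c where "c i = complex_of_real (1 / sqrt (\<Sum>k<n. (cmod (ws ! i $ k))\<^sup>2))" for i
  have wsc: "ws ! i \<in> carrier_vec n" if "i < n" for i
    using ws that by auto
  have W: "W \<in> carrier_mat n n"
    unfolding W_def using mat_of_cols_carrier(1)[of n "map cnormalize ws"] ws(3) by simp
  have colW: "col W i = c i \<cdot>\<^sub>v ws ! i" if "i < n" for i
    unfolding W_def using ws wsc[OF that] that
    by (subst col_mat_of_cols) (auto simp: cnormalize_def c_def)
  have "cadj W * W = 1\<^sub>m n"
  proof (rule eq_matI)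
    fix i j assume "i < dim_row (1\<^sub>m n)" and "j < dim_col (1\<^sub>m n)"
    then have i: "i < n" and j: "j < n"
      by auto
    have "(cadj W * W) $$ (i,j) = col W j \<bullet>c col W i"
      using cadj_mult_index[OF W W i j] .
    also have "\<dots> = c j * c i * (ws ! j \<bullet>c ws ! i)"
      unfolding colW[OF i] colW[OF j] conjugate_smult_vec
      using wsc[OF i] wsc[OF j] by (simp add: c_def)
    also have "\<dots> = (if i = j then 1 else 0)"
    proof (cases "i = j")
      case True
      define r where "r = (\<Sum>k<n. (cmod (ws ! i $ k))\<^sup>2)"
      have wr: "ws ! i \<bullet>c ws ! i = of_real r"
        unfolding r_def cscalar_prod_self using wsc[OF i] by simp
      moreover have "ws ! i \<bullet>c ws ! i \<noteq> 0"
        using corthogonalD[OF ws(2), of i i] ws i by auto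
      moreover have "r \<ge> 0"
        unfolding r_def by (simp add: sum_nonneg)
      ultimately have "r > 0"
        by fastforce
      then have "c i * c i * (ws ! i \<bullet>c ws ! i) = 1"
        unfolding wr c_def r_def[symmetric] by (simp flip: of_real_mult)
      then show ?thesis
        using True by simp
    next
      case False
      then show ?thesis
        using corthogonalD[OF ws(2), of j i] ws i j by auto
    qed
    finally show "(cadj W * W) $$ (i, j) = 1\<^sub>m n $$ (i, j)"
      using i j by simp
  qed (use W in auto)
  then show ?thesis
    using W unfolding unitary_mat_def W_def by blast
qed

lemma unitary_mat_first_col:
  assumes v: "v \<in> carrier_vec n" and v0: "v \<noteq> 0\<^sub>v n"
  obtains W c where "unitary_mat n W" "col W 0 = c \<cdot>\<^sub>v v"
proof -
  interpret cof_vec_space n "TYPE(complex)" .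
  define b where "b = basis_completion v"
  define ws where "ws = gram_schmidt n b"
  from basis_completion[OF v v0, folded b_def]
  have dist_b: "distinct b" and indep: "\<not> lin_dep (set b)" and b: "set b \<subseteq> carrier_vec n"
    and hdb: "hd b = v" and len_b: "length b = n"
    by auto
  have n: "0 < n"
    using v v0 by (cases n) auto
  from hdb len_b n obtain vs where bv: "b = v # vs"
    by (cases b) auto
  from gram_schmidt_result[OF b dist_b indep refl, folded ws_def]
  have ws: "set ws \<subseteq> carrier_vec n" "corthogonal ws" "length ws = n"
    by (auto simp: len_b)
  have "hd ws = v"
    using gram_schmidt_hd[OF v, of vs] unfolding ws_def bv .
  then have "ws ! 0 = v"
    using ws(3) n by (metis hd_conv_nth list.size(3) less_not_refl)
  moreover have "ws ! 0 \<in> carrier_vec n"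
    using ws(1,3) n nth_mem by blast
  ultimately have "col (mat_of_cols n (map cnormalize ws)) 0 = cnormalize v"
    using ws(3) n by (subst col_mat_of_cols) auto
  then show ?thesis
    using that[OF unitary_mat_of_corthogonal_cols[OF ws]] unfolding cnormalize_def by blast
qed

definition diag_ext :: "complex \<Rightarrow> complex mat \<Rightarrow> complex mat" where
  "diag_ext a M = four_block_mat (mat 1 1 (\<lambda>_. a)) (0\<^sub>m 1 (dim_col M)) (0\<^sub>m (dim_row M) 1) M"

lemma diag_ext_carrier [simp]: "M \<in> carrier_mat m m \<Longrightarrow> diag_ext a M \<in> carrier_mat (Suc m) (Suc m)"
  unfolding diag_ext_def by auto

lemma diag_ext_dims [simp]:
  "dim_row (diag_ext a M) = Suc (dim_row M)" "dim_col (diag_ext a M) = Suc (dim_col M)"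
  unfolding diag_ext_def by auto

lemma diag_ext_index:
  "i < Suc (dim_row M) \<Longrightarrow> j < Suc (dim_col M) \<Longrightarrow> diag_ext a M $$ (i,j) =
     (if i = 0 then (if j = 0 then a else 0) else if j = 0 then 0 else M $$ (i - 1, j - 1))"
  unfolding diag_ext_def by auto

lemma diag_ext_mult:
  assumes M: "M \<in> carrier_mat m m" and N: "N \<in> carrier_mat m m"
  shows "diag_ext a M * diag_ext b N = diag_ext (a * b) (M * N)"
proof -
  have "diag_ext a M * diag_ext b N =
    four_block_mat (mat 1 1 (\<lambda>_. a) * mat 1 1 (\<lambda>_. b) + 0\<^sub>m 1 m * 0\<^sub>m m 1)
     (mat 1 1 (\<lambda>_. a) * 0\<^sub>m 1 m + 0\<^sub>m 1 m * N) (0\<^sub>m m 1 * mat 1 1 (\<lambda>_. b) + M * 0\<^sub>m m 1)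
     (0\<^sub>m m 1 * 0\<^sub>m 1 m + M * N)"
    unfolding diag_ext_def using M N by (simp only: carrier_matD) (rule mult_four_block_mat, auto)
  also have "\<dots> = diag_ext (a * b) (M * N)"
    unfolding diag_ext_def using M N by (intro cong_four_block_mat) (auto simp: scalar_prod_def)
  finally show ?thesis .
qed

lemma cadj_diag_ext: "M \<in> carrier_mat m m \<Longrightarrow> cadj (diag_ext a M) = diag_ext (cnj a) (cadj M)"
  by (rule eq_matI) (auto simp: diag_ext_index)

lemma diag_ext_one: "diag_ext 1 (1\<^sub>m m) = 1\<^sub>m (Suc m)"
  by (rule eq_matI) (auto simp: diag_ext_index)

lemma diag_ext_mat_diag: "diag_ext a (mat_diag m f) = mat_diag (Suc m) (\<lambda>i. if i = 0 then a else f (i - 1))"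
  by (rule eq_matI) (auto simp: diag_ext_index)

lemma diag_ext_eqD:
  assumes "diag_ext a M = diag_ext b N" "M \<in> carrier_mat m m" "N \<in> carrier_mat m m"
  shows "M = N"
proof (rule eq_matI)
  fix i j assume ij: "i < dim_row N" "j < dim_col N"
  have "M $$ (i,j) = diag_ext a M $$ (Suc i, Suc j)"
    using assms(2,3) ij by (simp add: diag_ext_index)
  also have "\<dots> = N $$ (i,j)"
    using assms ij by (simp add: diag_ext_index)
  finally show "M $$ (i,j) = N $$ (i,j)" .
qed (use assms in auto)

lemma unitary_mat_diag_ext: "unitary_mat m U \<Longrightarrow> unitary_mat (Suc m) (diag_ext 1 U)"
  unfolding unitary_mat_def by (auto simp: cadj_diag_ext diag_ext_mult[OF cadj_carrier] diag_ext_one)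

lemma normal_mat_row0_zero:
  assumes A: "A \<in> carrier_mat n n" and nrm: "normal_mat A" and n: "0 < n"
    and col0: "\<And>i. 0 < i \<Longrightarrow> i < n \<Longrightarrow> A $$ (i,0) = 0"
    and j: "0 < j" "j < n"
  shows "A $$ (0,j) = 0"
proof -
  (* The (0,0) entry of A A^H is the squared length of row 0, that of A^H A the squared length
     of column 0, which here is just |A_00|^2. *)
  define f where "f j = (cmod (A $$ (0,j)))\<^sup>2" for j
  have cA: "cadj A \<in> carrier_mat n n"
    using A by simp
  have "(A * cadj A) $$ (0,0) = (cadj (cadj A) * cadj A) $$ (0,0)"
    by simp
  also have "\<dots> = col (cadj A) 0 \<bullet>c col (cadj A) 0"
    by (rule cadj_mult_index[OF cA cA n n])
  also have "\<dots> = of_real (\<Sum>k<n. f k)"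
    unfolding cscalar_prod_self f_def using A n by (auto intro!: sum.cong)
  finally have row: "(A * cadj A) $$ (0,0) = of_real (\<Sum>k<n. f k)" .
  have "(cadj A * A) $$ (0,0) = col A 0 \<bullet>c col A 0"
    by (rule cadj_mult_index[OF A A n n])
  also have "\<dots> = of_real (\<Sum>k<n. (cmod (A $$ (k,0)))\<^sup>2)"
    unfolding cscalar_prod_self using A n by (auto intro!: sum.cong)
  also have "(\<Sum>k<n. (cmod (A $$ (k,0)))\<^sup>2) = (\<Sum>k\<in>{0}. (cmod (A $$ (k,0)))\<^sup>2)"
    by (rule sum.mono_neutral_right) (use n col0 in auto)
  finally have col: "(cadj A * A) $$ (0,0) = of_real (f 0)"
    unfolding f_def by simp
  have "(\<Sum>k<n. f k) = f 0"
    using row col nrm by (metis of_real_eq_iff)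
  moreover have "(\<Sum>k<n. f k) = f 0 + (\<Sum>k\<in>{..<n} - {0}. f k)"
    using n by (simp add: sum.remove)
  ultimately have "(\<Sum>k\<in>{..<n} - {0}. f k) = 0"
    by simp
  then have "f j = 0"
    using j by (subst (asm) sum_nonneg_eq_0_iff) (auto simp: f_def)
  then show ?thesis
    by (simp add: f_def)
qed

lemma normal_mat_unitary_conj:
  assumes W: "unitary_mat n W" and A: "A \<in> carrier_mat n n" and nrm: "normal_mat A"
  shows "normal_mat (cadj W * A * W)"
proof -
  note WW = unitary_matD[OF W]
  note [simp] = assoc_mult_mat[of _ n n _ n _ n] mult_carrier_mat[of _ n n]
  have cA: "cadj A \<in> carrier_mat n n"
    using A by simp
  have cB: "cadj (cadj W * A * W) = cadj W * cadj A * W"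
    using WW A cA by (simp add: cadj_mult[of _ n n _ n])
  have "(cadj W * A * W) * cadj (cadj W * A * W) = cadj W * (A * ((W * cadj W) * (cadj A * W)))"
    unfolding cB using WW(1,2) A cA by simp
  also have "\<dots> = cadj W * (A * cadj A) * W"
    using WW A cA by simp
  also have "\<dots> = cadj W * (cadj A * A) * W"
    using nrm by simp
  also have "\<dots> = cadj W * (cadj A * ((W * cadj W) * (A * W)))"
    using WW A cA by simp
  also have "\<dots> = cadj (cadj W * A * W) * (cadj W * A * W)"
    unfolding cB using WW(1,2) A cA by simp
  finally show ?thesis .
qed

lemma unitary_conj_eigen_col0:
  assumes A: "A \<in> carrier_mat (Suc m) (Suc m)"
  obtains W e where "unitary_mat (Suc m) W" "col (cadj W * A * W) 0 = e \<cdot>\<^sub>v unit_vec (Suc m) 0"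
proof -
  have "degree (char_poly A) = Suc m"
    using degree_monic_char_poly[OF A] by simp
  then obtain e where "poly (char_poly A) e = 0"
    using fundamental_theorem_of_algebra constant_degree by (metis Zero_not_Suc)
  then have "eigenvalue A e"
    using eigenvalue_root_char_poly[OF A] by simp
  then obtain v where v: "v \<in> carrier_vec (Suc m)" "v \<noteq> 0\<^sub>v (Suc m)" "A *\<^sub>v v = e \<cdot>\<^sub>v v"
    unfolding eigenvalue_def eigenvector_def using A by auto
  obtain W c where W: "unitary_mat (Suc m) W" and cW: "col W 0 = c \<cdot>\<^sub>v v"
    using unitary_mat_first_col[OF v(1,2)] by blast
  note WW = unitary_matD[OF W]
  have "col (cadj W * A * W) 0 = cadj W *\<^sub>v (A *\<^sub>v col W 0)"
    using WW A col_mult2[OF WW(2), of "A * W" "Suc m" 0] col_mult2[OF A WW(1), of 0]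
    by (simp add: assoc_mult_mat[of _ "Suc m" "Suc m" _ "Suc m" _ "Suc m"])
  also have "\<dots> = e \<cdot>\<^sub>v (cadj W *\<^sub>v col W 0)"
    unfolding cW using mult_mat_vec[OF A v(1)] mult_mat_vec[OF WW(2) v(1)] v
      mult_mat_vec[OF WW(2), of "e \<cdot>\<^sub>v v"] mult_mat_vec[OF WW(2), of "c \<cdot>\<^sub>v v"]
    by (simp add: smult_smult_assoc mult.commute)
  also have "cadj W *\<^sub>v col W 0 = unit_vec (Suc m) 0"
    using col_mult2[OF WW(2,1), of 0] WW by simp
  finally show ?thesis
    using that W by blast
qed

lemma normal_mat_deflate:
  assumes A: "A \<in> carrier_mat (Suc m) (Suc m)" and nrm: "normal_mat A"
  obtains W e B where "unitary_mat (Suc m) W" "B \<in> carrier_mat m m" "normal_mat B"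
    "A = W * diag_ext e B * cadj W"
proof -
  obtain W e where W: "unitary_mat (Suc m) W"
    and col0: "col (cadj W * A * W) 0 = e \<cdot>\<^sub>v unit_vec (Suc m) 0"
    using unitary_conj_eigen_col0[OF A] .
  note WW = unitary_matD[OF W]
  define C where "C = cadj W * A * W"
  have C: "C \<in> carrier_mat (Suc m) (Suc m)"
    unfolding C_def using WW(1,2) A by (meson mult_carrier_mat)
  have Cn: "normal_mat C"
    unfolding C_def by (rule normal_mat_unitary_conj[OF W A nrm])
  have Ccol: "C $$ (i, 0) = (if i = 0 then e else 0)" if "i < Suc m" for i
  proof -
    have "C $$ (i, 0) = col C 0 $ i"
      using C that by simp
    also have "col C 0 = e \<cdot>\<^sub>v unit_vec (Suc m) 0"
      unfolding C_def by (rule col0)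
    finally show ?thesis
      using that by simp
  qed
  have Crow: "C $$ (0, j) = 0" if "0 < j" "j < Suc m" for j
    using normal_mat_row0_zero[OF C Cn _ _ that] Ccol by simp
  define B where "B = mat m m (\<lambda>(i,j). C $$ (Suc i, Suc j))"
  have B: "B \<in> carrier_mat m m"
    unfolding B_def by simp
  have CB: "C = diag_ext e B"
    by (rule eq_matI) (use C B Ccol Crow in \<open>auto simp: diag_ext_index B_def\<close>)
  have "diag_ext (e * cnj e) (B * cadj B) = diag_ext (cnj e * e) (cadj B * B)"
    using Cn unfolding CB cadj_diag_ext[OF B] diag_ext_mult[OF B cadj_carrier[OF B]]
      diag_ext_mult[OF cadj_carrier[OF B] B] .
  then have "normal_mat B"
    by (rule diag_ext_eqD) (use B in auto)
  moreover have "A = W * C * cadj W"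
    unfolding C_def using unitary_conj_cancel[of "Suc m" "cadj W" A] W WW A
    by (simp add: unitary_mat_def assoc_mult_mat[OF WW(2) A WW(1)])
  ultimately show ?thesis
    using that W B CB by blast
qed

theorem normal_mat_unitary_diag:
  assumes "A \<in> carrier_mat n n" "normal_mat A"
  obtains U d where "unitary_mat n U" "A = U * mat_diag n d * cadj U"
  using assms
proof (induction n arbitrary: A thesis)
  case 0
  have "A = 1\<^sub>m 0 * mat_diag 0 (\<lambda>_. 0) * cadj (1\<^sub>m 0)"
    by (rule eq_matI) (use 0 in auto)
  moreover have "unitary_mat 0 (1\<^sub>m 0)"
    unfolding unitary_mat_def by simp
  ultimately show ?case
    using 0 by blast
next
  case (Suc m)
  obtain W e B where W: "unitary_mat (Suc m) W" and B: "B \<in> carrier_mat m m"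
    and Bn: "normal_mat B" and AB: "A = W * diag_ext e B * cadj W"
    using normal_mat_deflate[OF Suc.prems(2,3)] .
  obtain V f where V: "unitary_mat m V" and BV: "B = V * mat_diag m f * cadj V"
    using Suc.IH[OF _ B Bn] .
  define d where "d i = (if i = 0 then e else f (i - 1))" for i
  define U where "U = W * diag_ext 1 V"
  note WW = unitary_matD[OF W] and VV = unitary_matD[OF V]
  have E: "diag_ext 1 V \<in> carrier_mat (Suc m) (Suc m)"
    using VV by simp
  have "diag_ext e B = diag_ext 1 V * mat_diag (Suc m) d * cadj (diag_ext 1 V)"
    unfolding BV d_def diag_ext_mat_diag[symmetric] using VV
    by (simp add: cadj_diag_ext diag_ext_mult[of _ m])
  then have "A = U * mat_diag (Suc m) d * cadj U"
    unfolding AB U_def using WW E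
    by (simp add: cadj_mult[OF WW(1) E] assoc_mult_mat[of _ "Suc m" "Suc m" _ "Suc m" _ "Suc m"]
      mult_carrier_mat[of _ "Suc m" "Suc m"])
  moreover have "unitary_mat (Suc m) U"
    unfolding U_def by (intro unitary_mat_mult W unitary_mat_diag_ext V)
  ultimately show ?case
    using Suc.prems(1) by blast
qed

lemma proots_prod_linear_factors: "proots (\<Prod>a\<leftarrow>xs. [:- a, 1:]) = mset (xs :: complex list)"
proof (induction xs)
  case (Cons x xs)
  have "(\<Prod>a\<leftarrow>xs. [:- a, 1:]) \<noteq> 0"
    by auto
  then show ?case
    using Cons.IH by (simp add: proots_mult del: mult_pCons_left)
qed simp

lemma mtrace_mult_comm:
  assumes A: "A \<in> carrier_mat n m" and B: "B \<in> carrier_mat m n"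
  shows "mtrace (A * B) = mtrace (B * A)"
proof -
  have "mtrace (A * B) = (\<Sum>i<n. \<Sum>k<m. A $$ (i,k) * B $$ (k,i))"
    unfolding mtrace_def using A B by (auto simp: scalar_prod_def atLeast0LessThan intro!: sum.cong)
  also have "\<dots> = (\<Sum>k<m. \<Sum>i<n. B $$ (k,i) * A $$ (i,k))"
    by (subst sum.swap) (simp add: mult.commute)
  also have "\<dots> = mtrace (B * A)"
    unfolding mtrace_def using A B by (auto simp: scalar_prod_def atLeast0LessThan intro!: sum.cong)
  finally show ?thesis .
qed

lemma frob2_eq_mtrace:
  assumes A: "A \<in> carrier_mat nr nc"
  shows "of_real (frob2 A) = mtrace (A * cadj A)"
proof -
  have "mtrace (A * cadj A) = (\<Sum>i<nr. \<Sum>j<nc. A $$ (i,j) * cnj (A $$ (i,j)))"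
    unfolding mtrace_def using A by (auto simp: scalar_prod_def atLeast0LessThan intro!: sum.cong)
  also have "\<dots> = (\<Sum>i<nr. \<Sum>j<nc. of_real ((cmod (A $$ (i,j)))\<^sup>2))"
    by (simp only: complex_norm_square)
  finally show ?thesis
    unfolding frob2_def using A by simp
qed

lemma exp_sums_of_nat_fact: "(\<lambda>k. z ^ k / of_nat (fact k)) sums exp (z :: complex)"
  using exp_converges[of z] by (simp add: scaleR_conv_of_real divide_inverse mult.commute)

context
  fixes n :: nat and U :: "complex mat"
  assumes U: "unitary_mat n U"
begin

private lemmas UU = unitary_matD[OF U]

lemma unitary_conj_carrier: "U * mat_diag n f * cadj U \<in> carrier_mat n n"
  using UU by (meson mat_diag_dim mult_carrier_mat)

lemma unitary_conj_mult:
  "(U * mat_diag n f * cadj U) * (U * mat_diag n g * cadj U) = U * mat_diag n (\<lambda>i. f i * g i) * cadj U"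
proof -
  have "(U * mat_diag n f * cadj U) * (U * mat_diag n g * cadj U) =
      U * (mat_diag n f * ((cadj U * U) * (mat_diag n g * cadj U)))"
    using UU(1,2) by (simp add: assoc_mult_mat[of _ n n _ n _ n] mult_carrier_mat[of _ n n])
  also have "\<dots> = U * (mat_diag n f * mat_diag n g * cadj U)"
    using UU by (simp flip: assoc_mult_mat[OF mat_diag_dim mat_diag_dim UU(2)])
  finally show ?thesis
    using UU(1,2) by (simp add: assoc_mult_mat[OF UU(1) mat_diag_dim UU(2)])
qed

lemma cadj_unitary_conj: "cadj (U * mat_diag n f * cadj U) = U * mat_diag n (\<lambda>i. cnj (f i)) * cadj U"
  using UU(1,2) by (simp add: cadj_mult[of _ n n _ n] cadj_mat_diag
    assoc_mult_mat[of _ n n _ n _ n] mult_carrier_mat[of _ n n])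

lemma char_poly_unitary_conj:
  "char_poly (U * mat_diag n f * cadj U) = (\<Prod>a\<leftarrow>map f [0..<n]. [:- a, 1:])"
proof -
  have "similar_mat_wit (U * mat_diag n f * cadj U) (mat_diag n f) U (cadj U)"
    unfolding similar_mat_wit_def Let_def using UU unitary_conj_carrier by auto
  then have "similar_mat (U * mat_diag n f * cadj U) (mat_diag n f)"
    unfolding similar_mat_def by blast
  then have "char_poly (U * mat_diag n f * cadj U) = char_poly (mat_diag n f)"
    by (rule char_poly_similar)
  also have "\<dots> = (\<Prod>a\<leftarrow>map f [0..<n]. [:- a, 1:])"
    using char_poly_upper_triangular[OF mat_diag_dim upper_triangular_mat_diag]
    by (simp add: diag_mat_mat_diag)
  finally show ?thesis .
qed

lemma eigs_unitary_conj: "eigs (U * mat_diag n f * cadj U) = mset (map f [0..<n])"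
  unfolding eigs_def char_poly_unitary_conj by (rule proots_prod_linear_factors)

lemma eigenvalue_unitary_conj: "eigenvalue (U * mat_diag n f * cadj U) l \<longleftrightarrow> (\<exists>i<n. l = f i)"
proof -
  have "char_poly (U * mat_diag n f * cadj U) \<noteq> 0"
    unfolding char_poly_unitary_conj by auto
  then have "eigenvalue (U * mat_diag n f * cadj U) l \<longleftrightarrow> l \<in># eigs (U * mat_diag n f * cadj U)"
    unfolding eigenvalue_root_char_poly[OF unitary_conj_carrier] eigs_def by simp
  then show ?thesis
    unfolding eigs_unitary_conj by auto
qed

lemma mtrace_unitary_conj: "mtrace (U * mat_diag n f * cadj U) = (\<Sum>i<n. f i)"
proof -
  have "mtrace (U * mat_diag n f * cadj U) = mtrace (cadj U * (U * mat_diag n f))"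
    by (rule mtrace_mult_comm[of _ n n]) (use UU in auto)
  also have "cadj U * (U * mat_diag n f) = mat_diag n f"
    using UU by (simp flip: assoc_mult_mat[of _ n n _ n _ n])
  finally show ?thesis
    by (simp add: mtrace_def)
qed

lemma frob2_unitary_conj: "frob2 (U * mat_diag n f * cadj U) = (\<Sum>i<n. (cmod (f i))\<^sup>2)"
proof -
  have "of_real (frob2 (U * mat_diag n f * cadj U)) = (\<Sum>i<n. f i * cnj (f i))"
    by (simp add: frob2_eq_mtrace[OF unitary_conj_carrier] cadj_unitary_conj unitary_conj_mult
      mtrace_unitary_conj)
  also have "\<dots> = of_real (\<Sum>i<n. (cmod (f i))\<^sup>2)"
    by (simp only: of_real_sum complex_norm_square)
  finally show ?thesis
    by (simp only: of_real_eq_iff)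
qed

lemma det_unitary_conj: "det (U * mat_diag n f * cadj U) = (\<Prod>i<n. f i)"
proof -
  have "det (U * mat_diag n f * cadj U) = det U * det (cadj U) * det (mat_diag n f)"
    using UU by (simp add: det_mult[of _ n])
  also have "det U * det (cadj U) = 1"
    using det_mult[OF UU(1,2)] UU by simp
  also have "det (mat_diag n f) = (\<Prod>i<n. f i)"
    using det_upper_triangular[OF upper_triangular_mat_diag mat_diag_dim]
    by (simp add: diag_mat_mat_diag prod.distinct_set_conv_list[symmetric] atLeast0LessThan)
  finally show ?thesis
    by simp
qed

lemma unitary_conj_power: "(U * mat_diag n f * cadj U) ^\<^sub>m k = U * mat_diag n (\<lambda>i. f i ^ k) * cadj U"
proof (induction k)
  case 0
  have "U * mat_diag n (\<lambda>i. f i ^ 0) * cadj U = 1\<^sub>m n"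
    using UU by simp
  then show ?case
    using unitary_conj_carrier UU by simp
next
  case (Suc k)
  then show ?case
    by (simp add: unitary_conj_mult mult.commute)
qed

lemma unitary_conj_index:
  assumes i: "i < n" and j: "j < n"
  shows "(U * mat_diag n f * cadj U) $$ (i,j) = (\<Sum>a<n. U $$ (i,a) * f a * cnj (U $$ (j,a)))"
proof -
  have "(U * mat_diag n f) $$ (i,b) = U $$ (i,b) * f b" if "b < n" for b
    using UU i that by (simp add: mat_diag_mult_right[of U n n])
  then show ?thesis
    using UU i j by (auto simp: scalar_prod_def atLeast0LessThan intro!: sum.cong)
qed

lemma mexp_unitary_conj: "mexp (U * mat_diag n f * cadj U) = U * mat_diag n (\<lambda>i. exp (f i)) * cadj U"
proof (rule eq_matI)
  fix i j assume "i < dim_row (U * mat_diag n (\<lambda>i. exp (f i)) * cadj U)"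
    and "j < dim_col (U * mat_diag n (\<lambda>i. exp (f i)) * cadj U)"
  then have i: "i < n" and j: "j < n"
    using UU by auto
  have "(\<lambda>k. ((U * mat_diag n f * cadj U) ^\<^sub>m k) $$ (i,j) / of_nat (fact k))
      = (\<lambda>k. \<Sum>a<n. U $$ (i,a) * cnj (U $$ (j,a)) * (f a ^ k / of_nat (fact k)))"
    unfolding unitary_conj_power unitary_conj_index[OF i j]
    by (auto simp: sum_divide_distrib intro!: sum.cong)
  moreover have "(\<lambda>k. \<Sum>a<n. U $$ (i,a) * cnj (U $$ (j,a)) * (f a ^ k / of_nat (fact k)))
      sums (\<Sum>a<n. U $$ (i,a) * cnj (U $$ (j,a)) * exp (f a))"
    by (intro sums_sum sums_mult exp_sums_of_nat_fact)
  moreover have "(\<Sum>a<n. U $$ (i,a) * cnj (U $$ (j,a)) * exp (f a)) =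
      (U * mat_diag n (\<lambda>i. exp (f i)) * cadj U) $$ (i,j)"
    unfolding unitary_conj_index[OF i j] by (simp add: ac_simps)
  ultimately show "mexp (U * mat_diag n f * cadj U) $$ (i, j) =
      (U * mat_diag n (\<lambda>i. exp (f i)) * cadj U) $$ (i, j)"
    unfolding mexp_def using i j UU by (simp add: sums_iff)
qed (use UU in \<open>auto simp: mexp_def\<close>)

end

section \<open>Logarithms in su(n) and their eigenvalue angles\<close>

lemma su_unitary_diag:
  assumes X: "X \<in> su n"
  obtains U \<theta> where "unitary_mat n U" "X = U * mat_diag n (\<lambda>i. \<i> * of_real (\<theta> i)) * cadj U"
proof -
  have Xc: "X \<in> carrier_mat n n" and aX: "cadj X = - X"
    using X by (auto simp: su_def)
  have "normal_mat X"
    using aX Xc by simp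
  then obtain U d where U: "unitary_mat n U" and Xd: "X = U * mat_diag n d * cadj U"
    using normal_mat_unitary_diag[OF Xc] by blast
  note UU = unitary_matD[OF U]
  have "mat_diag n (\<lambda>i. cnj (d i)) = cadj U * cadj X * U"
    unfolding Xd cadj_unitary_conj[OF U] using unitary_conj_cancel[OF U mat_diag_dim] by simp
  also have "\<dots> = - (cadj U * X * U)"
    unfolding aX using carrier_matD[OF UU(1)] carrier_matD[OF UU(2)] carrier_matD[OF Xc] by simp
  also have "cadj U * X * U = mat_diag n d"
    unfolding Xd using unitary_conj_cancel[OF U mat_diag_dim] by simp
  finally have cnj_d: "mat_diag n (\<lambda>i. cnj (d i)) = mat_diag n (\<lambda>i. - d i)"
    by (simp add: uminus_mat_diag)
  have "d i = \<i> * of_real (Im (d i))" if "i < n" for i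
    using mat_diag_eqD[OF cnj_d that] by (auto simp: complex_eq_iff)
  then have "X = U * mat_diag n (\<lambda>i. \<i> * of_real (Im (d i))) * cadj U"
    unfolding Xd by (metis mat_diag_cong)
  then show ?thesis
    by (rule that[OF U])
qed

lemma unitary_conj_imag_diag:
  fixes \<theta> :: "nat \<Rightarrow> real"
  assumes U: "unitary_mat n U"
  defines "X \<equiv> U * mat_diag n (\<lambda>i. \<i> * of_real (\<theta> i)) * cadj U"
  shows "mexp X = U * mat_diag n (\<lambda>i. cis (\<theta> i)) * cadj U"
    and "frob2 X = (\<Sum>i<n. (\<theta> i)\<^sup>2)"
    and "X \<in> su n \<longleftrightarrow> (\<Sum>i<n. \<theta> i) = 0"
    and "(\<forall>l. eigenvalue X l \<longrightarrow> - pi \<le> Im l \<and> Im l \<le> pi) \<longleftrightarrow> (\<forall>i<n. \<bar>\<theta> i\<bar> \<le> pi)"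
proof -
  note UU = unitary_matD[OF U]
  show "mexp X = U * mat_diag n (\<lambda>i. cis (\<theta> i)) * cadj U"
    unfolding X_def mexp_unitary_conj[OF U] by (simp add: cis_conv_exp)
  show "frob2 X = (\<Sum>i<n. (\<theta> i)\<^sup>2)"
    unfolding X_def frob2_unitary_conj[OF U] by (simp add: norm_mult)
  have "cadj X = U * mat_diag n (\<lambda>i. - (\<i> * of_real (\<theta> i))) * cadj U"
    unfolding X_def cadj_unitary_conj[OF U] by simp
  also have "\<dots> = - X"
    unfolding X_def using carrier_matD[OF UU(1)] carrier_matD[OF UU(2)] by (simp flip: uminus_mat_diag)
  finally have "cadj X = - X" .
  moreover have "mtrace X = \<i> * of_real (\<Sum>i<n. \<theta> i)"
    unfolding X_def mtrace_unitary_conj[OF U] by (simp add: sum_distrib_left)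
  ultimately show "X \<in> su n \<longleftrightarrow> (\<Sum>i<n. \<theta> i) = 0"
    unfolding su_def X_def using unitary_conj_carrier[OF U] by (simp flip: of_real_sum)
  show "(\<forall>l. eigenvalue X l \<longrightarrow> - pi \<le> Im l \<and> Im l \<le> pi) \<longleftrightarrow> (\<forall>i<n. \<bar>\<theta> i\<bar> \<le> pi)"
    unfolding X_def eigenvalue_unitary_conj[OF U] by (auto simp: abs_le_iff)
qed

lemma su_log_angles:
  assumes X: "X \<in> su n"
  obtains \<theta> where "(\<Sum>i<n. \<theta> i) = 0" "eigs (mexp X) = mset (map (\<lambda>i. cis (\<theta> i)) [0..<n])"
    "frob2 X = (\<Sum>i<n. (\<theta> i)\<^sup>2)" "X \<in> su_plog n (mexp X) \<longleftrightarrow> (\<forall>i<n. \<bar>\<theta> i\<bar> \<le> pi)"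
proof -
  obtain U \<theta> where U: "unitary_mat n U" and XU: "X = U * mat_diag n (\<lambda>i. \<i> * of_real (\<theta> i)) * cadj U"
    using su_unitary_diag[OF X] .
  note facts = unitary_conj_imag_diag[OF U, of \<theta>, folded XU]
  show ?thesis
  proof
    show "(\<Sum>i<n. \<theta> i) = 0"
      using facts(3) X by simp
    show "eigs (mexp X) = mset (map (\<lambda>i. cis (\<theta> i)) [0..<n])"
      unfolding facts(1) eigs_unitary_conj[OF U] ..
    show "frob2 X = (\<Sum>i<n. (\<theta> i)\<^sup>2)"
      by (rule facts(2))
    show "X \<in> su_plog n (mexp X) \<longleftrightarrow> (\<forall>i<n. \<bar>\<theta> i\<bar> \<le> pi)"
      unfolding su_plog_def using facts(4) X by simp
  qed
qed

definition su_logs :: "nat \<Rightarrow> complex mat \<Rightarrow> complex mat set" where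
  "su_logs n Q = {X \<in> su n. mexp X = Q}"

lemma su_plog_subset_su_logs: "su_plog n Q \<subseteq> su_logs n Q"
  by (auto simp: su_plog_def su_logs_def)

lemma m_min_eq_Inf_su_logs: "m_min n Q = Inf (frob2 ` su_logs n Q)"
  unfolding m_min_def su_logs_def by (rule arg_cong[of _ _ Inf]) auto

lemma su_log_of_angles:
  fixes \<theta> :: "nat \<Rightarrow> real"
  assumes V: "unitary_mat n V" and cis: "\<And>i. i < n \<Longrightarrow> cis (\<theta> i) = \<mu> i"
    and sum: "(\<Sum>i<n. \<theta> i) = 0"
  defines "X \<equiv> V * mat_diag n (\<lambda>i. \<i> * of_real (\<theta> i)) * cadj V"
  shows "X \<in> su_logs n (V * mat_diag n \<mu> * cadj V)"
    and "(\<forall>i<n. \<bar>\<theta> i\<bar> \<le> pi) \<Longrightarrow> X \<in> su_plog n (V * mat_diag n \<mu> * cadj V)"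
proof -
  note facts = unitary_conj_imag_diag[OF V, of \<theta>, folded X_def]
  have "mexp X = V * mat_diag n \<mu> * cadj V"
    unfolding facts(1) using cis by (metis mat_diag_cong)
  then show "X \<in> su_logs n (V * mat_diag n \<mu> * cadj V)"
    unfolding su_logs_def using facts(3) sum by simp
  then show "(\<forall>i<n. \<bar>\<theta> i\<bar> \<le> pi) \<Longrightarrow> X \<in> su_plog n (V * mat_diag n \<mu> * cadj V)"
    unfolding su_logs_def su_plog_def using facts(4) by simp
qed

lemma SU_unitary_diag:
  assumes Q: "Q \<in> SU n"
  obtains V \<mu> where "unitary_mat n V" "Q = V * mat_diag n \<mu> * cadj V"
    "\<And>i. i < n \<Longrightarrow> cmod (\<mu> i) = 1" "(\<Prod>i<n. \<mu> i) = 1"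
proof -
  have Qc: "Q \<in> carrier_mat n n" and QQ: "Q * cadj Q = 1\<^sub>m n" and dQ: "det Q = 1"
    using Q by (auto simp: SU_def)
  have "cadj Q * Q = 1\<^sub>m n"
    using mat_mult_left_right_inverse[OF Qc _ QQ] Qc by simp
  then have "normal_mat Q"
    using QQ by simp
  then obtain V \<mu> where V: "unitary_mat n V" and Qd: "Q = V * mat_diag n \<mu> * cadj V"
    using normal_mat_unitary_diag[OF Qc] by blast
  note VV = unitary_matD[OF V]
  have "V * mat_diag n (\<lambda>i. \<mu> i * cnj (\<mu> i)) * cadj V = V * mat_diag n (\<lambda>_. 1) * cadj V"
    using QQ VV unfolding Qd cadj_unitary_conj[OF V] unitary_conj_mult[OF V] by simp
  then have "cadj V * (V * mat_diag n (\<lambda>i. \<mu> i * cnj (\<mu> i)) * cadj V) * V =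
      cadj V * (V * mat_diag n (\<lambda>_. 1) * cadj V) * V"
    by simp
  then have "mat_diag n (\<lambda>i. \<mu> i * cnj (\<mu> i)) = mat_diag n (\<lambda>_. 1)"
    unfolding unitary_conj_cancel[OF V mat_diag_dim] .
  then have "complex_of_real ((cmod (\<mu> i))\<^sup>2) = 1" if "i < n" for i
    using mat_diag_eqD[OF _ that] by (simp only: complex_norm_square)
  then have "cmod (\<mu> i) = 1" if "i < n" for i
    using that by (smt (verit) norm_ge_zero of_real_eq_1_iff power2_eq_1_iff)
  moreover have "(\<Prod>i<n. \<mu> i) = 1"
    using dQ unfolding Qd det_unitary_conj[OF V] .
  ultimately show ?thesis
    using that V Qd by blast
qed

section \<open>Lifts of angles\<close>

lemma sum_mset_image_mset_upt: "(\<Sum>\<^sub># (image_mset f (mset (map g [0..<n])))) = (\<Sum>i<n. f (g i))"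
  by (induction n) (simp_all add: add.commute)

lemma count_mset_map_upt: "count (mset (map g [0..<n])) x = card {i. i < n \<and> g i = x}"
proof (induction n)
  case (Suc n)
  have "{i. i < Suc n \<and> g i = x} = (if g n = x then insert n else id) {i. i < n \<and> g i = x}"
    by (auto simp: less_Suc_eq)
  then show ?case
    using Suc by simp
qed simp

lemma cis_sum: "cis (\<Sum>x\<in>A. f x) = (\<Prod>x\<in>A. cis (f x))"
  by (induction A rule: infinite_finite_induct) (simp_all add: cis_mult[symmetric])

lemma cis_minus_pi: "cis (- pi) = - 1"
  by (simp add: complex_eq_iff)

lemma cis_Arg_unit:
  assumes "cmod z = 1"
  shows "cis (Arg z) = z"
proof -
  have "z \<noteq> 0"
    using assms by auto
  then show ?thesis
    using assms by (simp add: cis_Arg complex_sgn_def)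
qed

lemma Arg_cis_principal:
  assumes "- pi \<le> t" "t \<le> pi"
  shows "Arg (cis t) = (if t = - pi then pi else t)"
proof (cases "t = - pi")
  case True
  then show ?thesis
    using Arg_cis[of pi] by (simp add: cis_minus_pi)
qed (use assms Arg_cis[of t] in simp)

lemma Arg_cis_sq_le: "(Arg (cis t))\<^sup>2 \<le> t\<^sup>2"
proof (cases "\<bar>t\<bar> \<le> pi")
  case True
  then show ?thesis
    using Arg_cis_principal[of t] by auto
next
  case False
  moreover have "\<bar>Arg (cis t)\<bar> \<le> pi"
    using Arg_bounded[of "cis t"] by auto
  ultimately have "\<bar>Arg (cis t)\<bar> \<le> \<bar>t\<bar>"
    by simp
  then show ?thesis
    by (simp add: abs_le_square_iff)
qed

(* For a in (-pi, pi], the least t^2 over all t with cis t = cis a and |t| > pi. *)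
definition outer_angle_sq :: "real \<Rightarrow> real" where
  "outer_angle_sq a = (if a = pi then (3 * pi)\<^sup>2 else (2 * pi - \<bar>a\<bar>)\<^sup>2)"

lemma sq_less_outer_angle_sq:
  assumes "- pi < a" "a \<le> pi"
  shows "a\<^sup>2 < outer_angle_sq a"
proof (cases "a = pi")
  case False
  then have "\<bar>a\<bar>\<^sup>2 < (2 * pi - \<bar>a\<bar>)\<^sup>2"
    using assms by (intro power_strict_mono) auto
  then show ?thesis
    using False by (simp add: outer_angle_sq_def)
qed (simp add: outer_angle_sq_def power2_eq_square)

lemma outer_angle_sq_le:
  assumes t: "pi < \<bar>t\<bar>"
  shows "outer_angle_sq (Arg (cis t)) \<le> t\<^sup>2"
proof -
  define a where "a = Arg (cis t)"
  have a: "- pi < a" "a \<le> pi"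
    using Arg_bounded[of "cis t"] unfolding a_def by auto
  have "cis a = cis t"
    unfolding a_def by (simp add: cis_Arg_unit)
  then have "sin t = sin a \<and> cos t = cos a"
    by (simp add: complex_eq_iff)
  then obtain k :: int where tk: "t = a + 2 * pi * k"
    using sin_cos_eq_iff by blast
  define h where "h = (if a = pi then 3 * pi else 2 * pi - \<bar>a\<bar>)"
  have "h \<le> \<bar>t\<bar>"
  proof -
    consider "k \<ge> 1" | "k = 0" | "k = -1" | "k \<le> -2"
      by linarith
    then show ?thesis
    proof cases
      case 1
      then have "2 * pi * k \<ge> 2 * pi"
        by simp
      then show ?thesis
        unfolding h_def using tk a pi_gt_zero by (smt (verit))
    next
      case 2
      then show ?thesis
        using tk a t by auto
    next
      case 3
      then have "t = a - 2 * pi"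
        using tk by simp
      then show ?thesis
        unfolding h_def using a t pi_gt_zero by (smt (verit))
    next
      case 4
      then have "2 * pi * k \<le> 2 * pi * (- 2)"
        using pi_gt_zero by (intro mult_left_mono) auto
      then show ?thesis
        unfolding h_def using tk a pi_gt_zero by (smt (verit))
    qed
  qed
  moreover have "0 \<le> h"
    using a pi_gt_zero by (auto simp: h_def)
  ultimately have "h\<^sup>2 \<le> t\<^sup>2"
    by (simp add: abs_le_square_iff[symmetric])
  then show ?thesis
    unfolding a_def[symmetric] outer_angle_sq_def h_def by (auto simp: power2_eq_square)
qed

lemma uniform_outer_angle_excess:
  assumes "finite Z"
  obtains \<delta> where "\<delta> > 0" "\<And>t. pi < \<bar>t\<bar> \<Longrightarrow> cis t \<in> Z \<Longrightarrow> (Arg (cis t))\<^sup>2 + \<delta> \<le> t\<^sup>2"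
proof
  define excess where "excess z = outer_angle_sq (Arg z) - (Arg z)\<^sup>2" for z
  have "excess z > 0" for z
    using sq_less_outer_angle_sq[of "Arg z"] Arg_bounded[of z] by (simp add: excess_def)
  then show "Min (insert 1 (excess ` Z)) > 0"
    using assms by (subst Min_gr_iff) auto
  fix t assume t: "pi < \<bar>t\<bar>" "cis t \<in> Z"
  have "Min (insert 1 (excess ` Z)) \<le> excess (cis t)"
    using assms t by (intro Min_le) auto
  also have "\<dots> \<le> t\<^sup>2 - (Arg (cis t))\<^sup>2"
    using outer_angle_sq_le[OF t(1)] by (simp add: excess_def)
  finally show "(Arg (cis t))\<^sup>2 + Min (insert 1 (excess ` Z)) \<le> t\<^sup>2"
    by simp
qed

section \<open>Principal logarithms and the minimal norm\<close>

definition arg_sq_sum :: "complex mat \<Rightarrow> real" where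
  "arg_sq_sum Q = (\<Sum>\<^sub># (image_mset (\<lambda>\<mu>. (Arg \<mu>)\<^sup>2) (eigs Q)))"

lemma arg_sq_sum_le_frob2:
  assumes "X \<in> su_logs n Q"
  shows "arg_sq_sum Q \<le> frob2 X"
proof -
  have X: "X \<in> su n" and XQ: "mexp X = Q"
    using assms by (auto simp: su_logs_def)
  obtain \<theta> where eigs: "eigs Q = mset (map (\<lambda>i. cis (\<theta> i)) [0..<n])"
    and frob2: "frob2 X = (\<Sum>i<n. (\<theta> i)\<^sup>2)"
    using su_log_angles[OF X] unfolding XQ by blast
  have "arg_sq_sum Q = (\<Sum>i<n. (Arg (cis (\<theta> i)))\<^sup>2)"
    unfolding arg_sq_sum_def eigs sum_mset_image_mset_upt ..
  also have "\<dots> \<le> frob2 X"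
    unfolding frob2 by (intro sum_mono Arg_cis_sq_le)
  finally show ?thesis .
qed

lemma frob2_su_plog:
  assumes "X \<in> su_plog n Q"
  shows "frob2 X = arg_sq_sum Q"
proof -
  have X: "X \<in> su n" and XQ: "mexp X = Q"
    using assms by (auto simp: su_plog_def)
  obtain \<theta> where eigs: "eigs Q = mset (map (\<lambda>i. cis (\<theta> i)) [0..<n])"
    and frob2: "frob2 X = (\<Sum>i<n. (\<theta> i)\<^sup>2)" and plog: "X \<in> su_plog n Q \<longleftrightarrow> (\<forall>i<n. \<bar>\<theta> i\<bar> \<le> pi)"
    using su_log_angles[OF X] unfolding XQ by blast
  have bound: "\<forall>i<n. \<bar>\<theta> i\<bar> \<le> pi"
    using plog assms by blast
  have "arg_sq_sum Q = (\<Sum>i<n. (Arg (cis (\<theta> i)))\<^sup>2)"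
    unfolding arg_sq_sum_def eigs sum_mset_image_mset_upt ..
  also have "\<dots> = frob2 X"
    unfolding frob2 using bound Arg_cis_principal by (intro sum.cong) auto
  finally show ?thesis ..
qed

lemma frob2_gap_outside_su_plog:
  obtains \<delta> where "\<delta> > 0" "\<And>X. X \<in> su_logs n Q - su_plog n Q \<Longrightarrow> arg_sq_sum Q + \<delta> \<le> frob2 X"
proof -
  obtain \<delta> where \<delta>: "\<delta> > 0"
    and excess: "\<And>t. pi < \<bar>t\<bar> \<Longrightarrow> cis t \<in># eigs Q \<Longrightarrow> (Arg (cis t))\<^sup>2 + \<delta> \<le> t\<^sup>2"
    using uniform_outer_angle_excess[of "set_mset (eigs Q)"] by blast
  have "arg_sq_sum Q + \<delta> \<le> frob2 X" if "X \<in> su_logs n Q - su_plog n Q" for X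
  proof -
    have X: "X \<in> su n" and XQ: "mexp X = Q" and nplog: "X \<notin> su_plog n Q"
      using that by (auto simp: su_logs_def)
    obtain \<theta> where eigs: "eigs Q = mset (map (\<lambda>i. cis (\<theta> i)) [0..<n])"
      and frob2: "frob2 X = (\<Sum>i<n. (\<theta> i)\<^sup>2)" and plog: "X \<in> su_plog n Q \<longleftrightarrow> (\<forall>i<n. \<bar>\<theta> i\<bar> \<le> pi)"
      using su_log_angles[OF X] unfolding XQ by blast
    obtain j where j: "j < n" "pi < \<bar>\<theta> j\<bar>"
      using plog nplog by force
    have "\<delta> \<le> (\<theta> j)\<^sup>2 - (Arg (cis (\<theta> j)))\<^sup>2"
      using excess[OF j(2)] j(1) unfolding eigs by auto
    also have "\<dots> \<le> (\<Sum>i<n. (\<theta> i)\<^sup>2 - (Arg (cis (\<theta> i)))\<^sup>2)"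
      using j(1) Arg_cis_sq_le by (intro member_le_sum) auto
    also have "\<dots> = frob2 X - arg_sq_sum Q"
      unfolding frob2 arg_sq_sum_def eigs sum_mset_image_mset_upt by (simp add: sum_subtractf)
    finally show ?thesis
      by simp
  qed
  then show ?thesis
    using that \<delta> by blast
qed

lemma su_logs_nonempty:
  assumes "Q \<in> SU n"
  shows "su_logs n Q \<noteq> {}"
proof -
  obtain V \<mu> where V: "unitary_mat n V" and Q: "Q = V * mat_diag n \<mu> * cadj V"
    and unit: "\<And>i. i < n \<Longrightarrow> cmod (\<mu> i) = 1" and prod: "(\<Prod>i<n. \<mu> i) = 1"
    using SU_unitary_diag[OF assms] by blast
  define S where "S = (\<Sum>i<n. Arg (\<mu> i))"
  define \<theta> where "\<theta> i = Arg (\<mu> i) - (if i = 0 then S else 0)" for i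
  have "cis S = 1"
    unfolding S_def cis_sum using prod unit by (simp add: cis_Arg_unit)
  then have "cis (\<theta> i) = \<mu> i" if "i < n" for i
    using that unit by (simp add: \<theta>_def cis_Arg_unit flip: cis_divide)
  moreover have "(\<Sum>i<n. \<theta> i) = 0"
    unfolding \<theta>_def sum_subtractf S_def[symmetric] by (cases n) (simp_all add: S_def)
  ultimately show ?thesis
    using su_log_of_angles(1)[OF V] unfolding Q by blast
qed

lemma zeta_su_plog:
  assumes "X \<in> su_plog n Q"
  shows "\<exists>k::nat. k \<le> s_mult Q \<and> zeta Q = real k"
proof -
  have X: "X \<in> su n" and XQ: "mexp X = Q"
    using assms by (auto simp: su_plog_def)
  obtain \<theta> where sum: "(\<Sum>i<n. \<theta> i) = 0" and eigs: "eigs Q = mset (map (\<lambda>i. cis (\<theta> i)) [0..<n])"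
    and plog: "X \<in> su_plog n Q \<longleftrightarrow> (\<forall>i<n. \<bar>\<theta> i\<bar> \<le> pi)"
    using su_log_angles[OF X] unfolding XQ by blast
  have bound: "\<forall>i<n. \<bar>\<theta> i\<bar> \<le> pi"
    using plog assms by blast
  define K where "K = {i \<in> {..<n}. \<theta> i = - pi}"
  have "(\<Sum>i<n. Arg (cis (\<theta> i))) = (\<Sum>i<n. \<theta> i + (if \<theta> i = - pi then 2 * pi else 0))"
    using bound Arg_cis_principal by (intro sum.cong) auto
  also have "\<dots> = (\<Sum>i\<in>K. 2 * pi)"
    unfolding sum.distrib sum K_def sum.inter_filter[OF finite_lessThan] by simp
  finally have "zeta Q = real (card K)"
    unfolding zeta_def eigs sum_mset_image_mset_upt by simp
  moreover have "card K \<le> s_mult Q"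
    unfolding s_mult_def eigs count_mset_map_upt K_def by (rule card_mono) (auto simp: cis_minus_pi)
  ultimately show ?thesis
    by blast
qed

lemma su_plog_nonempty:
  assumes Q: "Q \<in> SU n" and k: "k \<le> s_mult Q" and zeta: "zeta Q = real k"
  shows "su_plog n Q \<noteq> {}"
proof -
  obtain V \<mu> where V: "unitary_mat n V" and Qd: "Q = V * mat_diag n \<mu> * cadj V"
    and unit: "\<And>i. i < n \<Longrightarrow> cmod (\<mu> i) = 1"
    using SU_unitary_diag[OF Q] by blast
  have eigs: "eigs Q = mset (map \<mu> [0..<n])"
    unfolding Qd by (rule eigs_unitary_conj[OF V])
  have "k \<le> card {i. i < n \<and> \<mu> i = - 1}"
    using k unfolding s_mult_def eigs count_mset_map_upt .
  then obtain J where J: "J \<subseteq> {i. i < n \<and> \<mu> i = - 1}" "card J = k"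
    by (meson obtain_subset_with_card_n)
  define \<theta> where "\<theta> i = Arg (\<mu> i) - (if i \<in> J then 2 * pi else 0)" for i
  have Arg_J: "Arg (\<mu> i) = pi" if "i \<in> J" for i
    using J that Arg_cis[of pi] by auto
  have "cis (\<theta> i) = \<mu> i" if "i < n" for i
    using that J unit Arg_J by (auto simp: \<theta>_def cis_Arg_unit cis_minus_pi)
  moreover have "(\<Sum>i<n. \<theta> i) = 0"
  proof -
    have "(\<Sum>i<n. Arg (\<mu> i)) = 2 * pi * k"
      using zeta unfolding zeta_def eigs sum_mset_image_mset_upt by (simp add: field_simps)
    moreover have "(\<Sum>i<n. if i \<in> J then 2 * pi else 0) = 2 * pi * k"
      using J by (simp add: sum.If_cases Int_absorb1 subset_eq)
    ultimately show ?thesis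
      unfolding \<theta>_def by (simp add: sum_subtractf)
  qed
  moreover have "\<forall>i<n. \<bar>\<theta> i\<bar> \<le> pi"
  proof (intro allI impI)
    fix i
    show "\<bar>\<theta> i\<bar> \<le> pi"
      using Arg_bounded[of "\<mu> i"] Arg_J[of i] by (auto simp: \<theta>_def)
  qed
  ultimately show ?thesis
    using su_log_of_angles(2)[OF V] unfolding Qd by blast
qed

lemma m_min_eq_arg_sq_sum:
  assumes "su_plog n Q \<noteq> {}"
  shows "m_min n Q = arg_sq_sum Q"
proof -
  obtain X where X: "X \<in> su_plog n Q"
    using assms by blast
  have "arg_sq_sum Q \<in> frob2 ` su_logs n Q"
    using X frob2_su_plog[OF X] su_plog_subset_su_logs by force
  then show ?thesis
    unfolding m_min_eq_Inf_su_logs using arg_sq_sum_le_frob2 by (intro cInf_eq_minimum) auto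
qed

lemma arg_sq_sum_less_m_min:
  assumes "Q \<in> SU n" and "su_plog n Q = {}"
  shows "arg_sq_sum Q < m_min n Q"
proof -
  obtain \<delta> where "\<delta> > 0" and gap: "\<And>X. X \<in> su_logs n Q - su_plog n Q \<Longrightarrow> arg_sq_sum Q + \<delta> \<le> frob2 X"
    using frob2_gap_outside_su_plog[where n = n and Q = Q] by blast
  moreover have "arg_sq_sum Q + \<delta> \<le> m_min n Q"
    unfolding m_min_eq_Inf_su_logs using su_logs_nonempty[OF assms(1)] gap assms(2)
    by (intro cInf_greatest) auto
  ultimately show ?thesis
    by simp
qed

lemma Theta_eq_su_plog:
  assumes "su_plog n Q \<noteq> {}"
  shows "Theta n Q = su_plog n Q"
proof -
  have m_min: "m_min n Q = arg_sq_sum Q"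
    using m_min_eq_arg_sq_sum[OF assms] .
  obtain \<delta> where "\<delta> > 0" and gap: "\<And>X. X \<in> su_logs n Q - su_plog n Q \<Longrightarrow> arg_sq_sum Q + \<delta> \<le> frob2 X"
    using frob2_gap_outside_su_plog[where n = n and Q = Q] by blast
  have "X \<in> su_plog n Q" if "X \<in> Theta n Q" for X
    using gap \<open>\<delta> > 0\<close> that m_min by (force simp: Theta_def su_logs_def)
  moreover have "X \<in> Theta n Q" if "X \<in> su_plog n Q" for X
    using that m_min frob2_su_plog[OF that] by (auto simp: Theta_def su_plog_def)
  ultimately show ?thesis
    by blast
qed

theorem lemma2p5:
  fixes n :: nat and Q :: "complex mat"
  assumes "n \<ge> 2" and "Q \<in> SU n"
  shows "(su_plog n Q \<noteq> {} \<longleftrightarrow> (\<exists>k::nat. k \<le> s_mult Q \<and> zeta Q = real k))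
       \<and> ((\<exists>k::nat. k \<le> s_mult Q \<and> zeta Q = real k) \<longleftrightarrow>
            m_min n Q = (\<Sum>\<^sub># (image_mset (\<lambda>\<mu>. (Arg \<mu>)\<^sup>2) (eigs Q))))
       \<and> (su_plog n Q \<noteq> {} \<longrightarrow> Theta n Q = su_plog n Q)"
proof -
  have plog_iff_zeta: "su_plog n Q \<noteq> {} \<longleftrightarrow> (\<exists>k::nat. k \<le> s_mult Q \<and> zeta Q = real k)"
    using zeta_su_plog su_plog_nonempty[OF assms(2)] by blast
  have "m_min n Q = arg_sq_sum Q \<longleftrightarrow> su_plog n Q \<noteq> {}"
    using m_min_eq_arg_sq_sum arg_sq_sum_less_m_min[OF assms(2)] by force
  then show ?thesis
    using plog_iff_zeta Theta_eq_su_plog unfolding arg_sq_sum_def by blast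
qed

end
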